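(* Let $H=\Theta(2,4,4)$ and $G=H^2$. Then $G$ is equitably $5$-choosable.
   Context: $\Theta(l_1,\ldots,l_m)$ denotes the graph consisting of two vertices $u,w$ joined by $m$ internally disjoint paths of lengths $l_1,\ldots,l_m$. For a graph $H$, $H^2$ has vertex set $V(H)$ with two vertices adjacent iff their distance in $H$ is 1 or 2. A $k$-assignment $L$ assigns to each vertex a set of exactly $k$ colors; an equitable $L$-coloring of $G$ is a proper coloring $f$ with $f(v)\in L(v)$ such that no color is used more than $\lceil |V(G)|/k\rceil$ times; $G$ is equitably $k$-choosable if it has an equitable $L$-coloring for every $k$-assignment $L$. *)

theory Defs
  imports Complex_Main
begin

text \<open>Simple graphs are given by a vertex set V and a symmetric adjacency relation E.\<close>

datatype tvert = TU | TW | TI nat nat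

text \<open>Theta graph Theta(l_1,...,l_m): vertices u = TU, w = TW, and interior vertices
  TI i j (path i, position j, 1 <= j <= l_i - 1) of the i-th u-w path of length l_i.\<close>

definition theta_verts :: "nat list \<Rightarrow> tvert set" where
  "theta_verts ls = {TU, TW} \<union> {TI i j | i j. i < length ls \<and> 1 \<le> j \<and> j < ls ! i}"

definition theta_pos :: "nat list \<Rightarrow> nat \<Rightarrow> nat \<Rightarrow> tvert" where
  "theta_pos ls i p = (if p = 0 then TU else if p = ls ! i then TW else TI i p)"

definition theta_adj :: "nat list \<Rightarrow> tvert \<Rightarrow> tvert \<Rightarrow> bool" where
  "theta_adj ls x y = (\<exists>i p. i < length ls \<and> p < ls ! i \<and>
      ((x = theta_pos ls i p \<and> y = theta_pos ls i (Suc p)) \<or>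
       (y = theta_pos ls i p \<and> x = theta_pos ls i (Suc p))))"

definition sq_adj :: "'a set \<Rightarrow> ('a \<Rightarrow> 'a \<Rightarrow> bool) \<Rightarrow> 'a \<Rightarrow> 'a \<Rightarrow> bool" where
  "sq_adj V E x y = (x \<in> V \<and> y \<in> V \<and> x \<noteq> y \<and> (E x y \<or> (\<exists>z\<in>V. E x z \<and> E z y)))"

definition k_assignment :: "'a set \<Rightarrow> nat \<Rightarrow> ('a \<Rightarrow> 'c set) \<Rightarrow> bool" where
  "k_assignment V k L = (\<forall>v\<in>V. finite (L v) \<and> card (L v) = k)"

definition equitable_L_coloring ::
  "'a set \<Rightarrow> ('a \<Rightarrow> 'a \<Rightarrow> bool) \<Rightarrow> nat \<Rightarrow> ('a \<Rightarrow> 'c set) \<Rightarrow> ('a \<Rightarrow> 'c) \<Rightarrow> bool" where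
  "equitable_L_coloring V E k L f =
     ((\<forall>v\<in>V. f v \<in> L v) \<and>
      (\<forall>x\<in>V. \<forall>y\<in>V. E x y \<longrightarrow> f x \<noteq> f y) \<and>
      (\<forall>c. card {v\<in>V. f v = c} \<le> nat \<lceil>real (card V) / real k\<rceil>))"

text \<open>Equitable k-choosability; colours are natural numbers (any countable supply suffices).\<close>
definition equitably_choosable :: "'a set \<Rightarrow> ('a \<Rightarrow> 'a \<Rightarrow> bool) \<Rightarrow> nat \<Rightarrow> bool" where
  "equitably_choosable V E k =
     (\<forall>L :: 'a \<Rightarrow> nat set. k_assignment V k L \<longrightarrow> (\<exists>f. equitable_L_coloring V E k L f))"

end

theory Submission
  imports Defs
begin

text \<open>Write \<open>a = TI 0 1\<close> for the inner vertex of the path of length 2 and \<open>x\<^sub>j = TI 1 j\<close>,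
  \<open>y\<^sub>j = TI 2 j\<close> for the inner vertices of the two paths of length 4. Since \<open>\<lceil>9/5\<rceil> = 2\<close>,
  a proper colouring of \<open>G = H\<^sup>2\<close> is equitable iff no colour class has three vertices. The only
  independent triple of \<open>G\<close> is \<open>{a, x\<^sub>2, y\<^sub>2}\<close>, so it suffices to find a proper \<open>L\<close>-colouring
  with \<open>f a \<noteq> f x\<^sub>2\<close>. Adding \<open>a x\<^sub>2\<close> as an extra constraint, in the order
  \<open>u, w, a, x\<^sub>2, x\<^sub>1, x\<^sub>3, y\<^sub>1, y\<^sub>3, y\<^sub>2\<close> every vertex has at most four constraints among the
  vertices before it, so greedy colouring from lists of size 5 succeeds.\<close>

text \<open>The head of the list is coloured last.\<close>

fun greedy_order :: "('a \<Rightarrow> 'a \<Rightarrow> bool) \<Rightarrow> ('a \<Rightarrow> 'c set) \<Rightarrow> 'a list \<Rightarrow> bool" where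
  "greedy_order R L [] = True"
| "greedy_order R L (v # vs) \<longleftrightarrow> length (filter (R v) vs) < card (L v) \<and> greedy_order R L vs"

lemma ex_notin_if_card_less:
  assumes "finite B" "card B < card A"
  shows "\<exists>c\<in>A. c \<notin> B"
  using assms card_mono[of B A] by (meson not_le subsetI)

lemma greedy_list_colouring:
  assumes "symp R" "irreflp R" "greedy_order R L vs"
  shows "\<exists>f. (\<forall>v\<in>set vs. f v \<in> L v) \<and> (\<forall>v\<in>set vs. \<forall>u\<in>set vs. R v u \<longrightarrow> f v \<noteq> f u)"
  using assms(3)
proof (induction vs)
  case Nil
  show ?case by simp
next
  case (Cons v vs)
  then obtain f where f_in: "\<forall>w\<in>set vs. f w \<in> L w"
    and f_proper: "\<forall>w\<in>set vs. \<forall>u\<in>set vs. R w u \<longrightarrow> f w \<noteq> f u"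
    by auto
  let ?B = "f ` {u \<in> set vs. R v u}"
  have "card ?B \<le> length (filter (R v) vs)"
    using card_image_le[of "{u \<in> set vs. R v u}" f] card_length[of "filter (R v) vs"] by simp
  then have "card ?B < card (L v)"
    using Cons.prems by simp
  then obtain c where c: "c \<in> L v" "c \<notin> ?B"
    using ex_notin_if_card_less[of ?B "L v"] by auto
  define g where "g = f(v := c)"
  have "g w \<noteq> g u" if "w \<in> set (v # vs)" "u \<in> set (v # vs)" "R w u" for w u
  proof -
    have "w \<noteq> u" and "R u w"
      using \<open>R w u\<close> assms(1,2) by (auto simp: irreflp_def symp_def)
    then show ?thesis
      using that f_proper c(2) by (auto simp: g_def)
  qed
  moreover have "\<forall>w\<in>set (v # vs). g w \<in> L w"
    using f_in c(1) by (simp add: g_def)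
  ultimately show ?case by (intro exI[of _ g]) blast
qed

lemma card_le_2_if_no_three_distinct:
  assumes "finite A" "\<And>x y z. x \<in> A \<Longrightarrow> y \<in> A \<Longrightarrow> z \<in> A \<Longrightarrow> x = y \<or> x = z \<or> y = z"
  shows "card A \<le> 2"
proof (rule ccontr)
  assume "\<not> card A \<le> 2"
  then obtain T where "T \<subseteq> A" "card T = 3"
    using obtain_subset_with_card_n[of 3 A] by auto
  then obtain x y z where "{x, y, z} \<subseteq> A" "x \<noteq> y" "y \<noteq> z" "x \<noteq> z"
    by (auto simp: card_3_iff)
  then show False
    using assms(2)[of x y z] by blast
qed

lemma symp_sq_adj: "symp E \<Longrightarrow> symp (sq_adj V E)"
  unfolding symp_def sq_adj_def by blast

lemma symp_theta_adj: "symp (theta_adj ls)"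
  unfolding symp_def theta_adj_def by blast

abbreviation theta244_sq_adj :: "tvert \<Rightarrow> tvert \<Rightarrow> bool" where
  "theta244_sq_adj \<equiv> sq_adj (theta_verts [2,4,4]) (theta_adj [2,4,4])"

lemma theta244_verts:
  "theta_verts [2,4,4] = {TU, TW, TI 0 1, TI 1 1, TI 1 2, TI 1 3, TI 2 1, TI 2 2, TI 2 3}"
  unfolding theta_verts_def
  by (auto simp: less_Suc_eq numeral_eq_Suc nth_Cons')

definition theta244_edges :: "(tvert \<times> tvert) set" where
  "theta244_edges =
     {(TU, TI 0 1), (TI 0 1, TW),
      (TU, TI 1 1), (TI 1 1, TI 1 2), (TI 1 2, TI 1 3), (TI 1 3, TW),
      (TU, TI 2 1), (TI 2 1, TI 2 2), (TI 2 2, TI 2 3), (TI 2 3, TW)}"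

lemma ex_less_Suc: "(\<exists>p<Suc n. P p) \<longleftrightarrow> P n \<or> (\<exists>p<n. P p)"
  by (auto simp: less_Suc_eq)

lemma theta244_adj_iff:
  "theta_adj [2,4,4] x y \<longleftrightarrow> (x, y) \<in> theta244_edges \<or> (y, x) \<in> theta244_edges"
proof -
  have "theta_adj [2,4,4] x y \<longleftrightarrow> (\<exists>i<Suc (Suc (Suc 0)). \<exists>p<[2,4,4]!i.
      (x = theta_pos [2,4,4] i p \<and> y = theta_pos [2,4,4] i (Suc p)) \<or>
      (y = theta_pos [2,4,4] i p \<and> x = theta_pos [2,4,4] i (Suc p)))"
    unfolding theta_adj_def by simp
  also have "\<dots> \<longleftrightarrow> (x, y) \<in> theta244_edges \<or> (y, x) \<in> theta244_edges"
    unfolding theta244_edges_def theta_pos_def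
    by (simp add: numeral_eq_Suc ex_less_Suc) auto
  finally show ?thesis .
qed

definition theta244_sq_nonedges :: "(tvert \<times> tvert) set" where
  "theta244_sq_nonedges =
     {(TU, TI 1 3), (TU, TI 2 3), (TW, TI 1 1), (TW, TI 2 1), (TI 0 1, TI 1 2), (TI 0 1, TI 2 2),
      (TI 1 1, TI 2 2), (TI 1 1, TI 2 3), (TI 1 2, TI 2 1), (TI 1 2, TI 2 2), (TI 1 2, TI 2 3),
      (TI 1 3, TI 2 1), (TI 1 3, TI 2 2)}"

lemma theta244_sq_nonadj:
  assumes "x \<in> theta_verts [2,4,4]" "y \<in> theta_verts [2,4,4]" "x \<noteq> y"
    and "\<not> theta244_sq_adj x y"
  shows "(x, y) \<in> theta244_sq_nonedges \<or> (y, x) \<in> theta244_sq_nonedges"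
  using assms unfolding sq_adj_def theta244_verts theta244_adj_iff theta244_edges_def
    theta244_sq_nonedges_def
  by (elim insertE emptyE; simp)

lemma theta244_sq_nonedges_triangle:
  assumes "(x, y) \<in> theta244_sq_nonedges \<or> (y, x) \<in> theta244_sq_nonedges"
    and "(x, z) \<in> theta244_sq_nonedges \<or> (z, x) \<in> theta244_sq_nonedges"
    and "(y, z) \<in> theta244_sq_nonedges \<or> (z, y) \<in> theta244_sq_nonedges"
  shows "{x, y, z} = {TI 0 1, TI 1 2, TI 2 2}"
  using assms(1) unfolding theta244_sq_nonedges_def
  by (simp only: insert_iff empty_iff prod.inject simp_thms)
    (elim disjE conjE; hypsubst; insert assms(2,3);
      simp add: theta244_sq_nonedges_def; elim disjE; simp add: insert_commute)

lemma theta244_sq_independent_triple: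
  assumes "x \<in> theta_verts [2,4,4]" "y \<in> theta_verts [2,4,4]" "z \<in> theta_verts [2,4,4]"
    and "x \<noteq> y" "x \<noteq> z" "y \<noteq> z"
    and "\<not> theta244_sq_adj x y"
    and "\<not> theta244_sq_adj x z"
    and "\<not> theta244_sq_adj y z"
  shows "{x, y, z} = {TI 0 1, TI 1 2, TI 2 2}"
  using assms by (intro theta244_sq_nonedges_triangle theta244_sq_nonadj)

lemma theta244_sq_list_colouring:
  assumes "k_assignment (theta_verts [2,4,4]) 5 L"
  obtains f where "\<forall>v\<in>theta_verts [2,4,4]. f v \<in> L v"
    and "\<forall>x\<in>theta_verts [2,4,4]. \<forall>y\<in>theta_verts [2,4,4]. theta244_sq_adj x y \<longrightarrow> f x \<noteq> f y"
    and "f (TI 0 1) \<noteq> f (TI 1 2)"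
proof -
  define R where "R x y \<longleftrightarrow> theta244_sq_adj x y \<or> {x, y} = {TI 0 1, TI 1 2}" for x y
  define order where "order = [TI 2 2, TI 2 3, TI 2 1, TI 1 3, TI 1 1, TI 1 2, TI 0 1, TW, TU]"
  have "symp R"
    using symp_sq_adj[OF symp_theta_adj] unfolding R_def symp_def by (metis insert_commute)
  moreover have "irreflp R"
    unfolding R_def irreflp_def sq_adj_def by (simp add: doubleton_eq_iff)
  moreover have "greedy_order R L order"
    using assms unfolding order_def R_def k_assignment_def theta244_verts sq_adj_def
      theta244_adj_iff theta244_edges_def doubleton_eq_iff
    by simp
  moreover have "set order = theta_verts [2,4,4]"
    unfolding order_def theta244_verts by auto
  ultimately obtain f where in_lists: "\<forall>v\<in>theta_verts [2,4,4]. f v \<in> L v"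
    and proper: "\<forall>v\<in>theta_verts [2,4,4]. \<forall>u\<in>theta_verts [2,4,4]. R v u \<longrightarrow> f v \<noteq> f u"
    using greedy_list_colouring by metis
  have "TI 0 1 \<in> theta_verts [2,4,4]" "TI 1 2 \<in> theta_verts [2,4,4]"
    by (simp_all add: theta244_verts)
  with proper have "f (TI 0 1) \<noteq> f (TI 1 2)"
    unfolding R_def by blast
  with in_lists proper show thesis
    using that unfolding R_def by blast
qed

lemma theta244_sq_colour_class_le_2:
  assumes proper: "\<forall>x\<in>theta_verts [2,4,4]. \<forall>y\<in>theta_verts [2,4,4]. theta244_sq_adj x y \<longrightarrow> f x \<noteq> f y"
    and "f (TI 0 1) \<noteq> f (TI 1 2)"
  shows "card {v \<in> theta_verts [2,4,4]. f v = c} \<le> 2"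
proof (rule card_le_2_if_no_three_distinct)
  show "finite {v \<in> theta_verts [2,4,4]. f v = c}"
    by (simp add: theta244_verts)
next
  fix x y z
  assume "x \<in> {v \<in> theta_verts [2,4,4]. f v = c}" "y \<in> {v \<in> theta_verts [2,4,4]. f v = c}"
    "z \<in> {v \<in> theta_verts [2,4,4]. f v = c}"
  then have in_verts: "x \<in> theta_verts [2,4,4]" "y \<in> theta_verts [2,4,4]" "z \<in> theta_verts [2,4,4]"
    and same_colour: "f x = c" "f y = c" "f z = c"
    by auto
  show "x = y \<or> x = z \<or> y = z"
  proof (rule ccontr)
    assume "\<not> (x = y \<or> x = z \<or> y = z)"
    then have "x \<noteq> y" "x \<noteq> z" "y \<noteq> z"
      by simp_all
    moreover have "\<not> theta244_sq_adj x y" "\<not> theta244_sq_adj x z" "\<not> theta244_sq_adj y z"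
      using proper in_verts same_colour by metis+
    ultimately have "{x, y, z} = {TI 0 1, TI 1 2, TI 2 2}"
      by (rule theta244_sq_independent_triple[OF in_verts])
    then have "TI 0 1 \<in> {x, y, z}" "TI 1 2 \<in> {x, y, z}"
      by simp_all
    with same_colour \<open>f (TI 0 1) \<noteq> f (TI 1 2)\<close> show False
      by auto
  qed
qed

theorem lemma3p5:
  shows "equitably_choosable (theta_verts [2,4,4])
           (sq_adj (theta_verts [2,4,4]) (theta_adj [2,4,4])) 5"
  unfolding equitably_choosable_def
proof (intro allI impI)
  fix L :: "tvert \<Rightarrow> nat set"
  assume "k_assignment (theta_verts [2,4,4]) 5 L"
  then obtain f where "\<forall>v\<in>theta_verts [2,4,4]. f v \<in> L v"
    and proper: "\<forall>x\<in>theta_verts [2,4,4]. \<forall>y\<in>theta_verts [2,4,4]. theta244_sq_adj x y \<longrightarrow> f x \<noteq> f y"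
    and "f (TI 0 1) \<noteq> f (TI 1 2)"
    by (rule theta244_sq_list_colouring)
  moreover have "card {v \<in> theta_verts [2,4,4]. f v = c} \<le> nat \<lceil>real (card (theta_verts [2,4,4])) / real 5\<rceil>"
    for c
    using theta244_sq_colour_class_le_2[OF proper \<open>f (TI 0 1) \<noteq> f (TI 1 2)\<close>]
    by (simp add: theta244_verts)
  ultimately show "\<exists>f. equitable_L_coloring (theta_verts [2,4,4]) theta244_sq_adj 5 L f"
    unfolding equitable_L_coloring_def by blast
qed

end
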